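(* In the setting described in the context, assume $\mathcal{A}$ satisfies the Deep-$\mathfrak{M}$-Null Space Property with constants $\gamma\ge1$, $\rho>0$, and let $\sigma_{\mathfrak{M}}>0$ be a Deep-lower-RIP constant of $\mathcal{A}$ with regard to $\mathfrak{M}$. Let $\overline{\mathcal{S}}\in\mathfrak{M}$, $\overline{\mathbf{h}}\in\mathbb{R}^{S\times K}_{\overline{\mathcal{S}}}$, $\delta\ge0$, and $X=M_1(\overline{\mathbf{h}}_1)\cdots M_K(\overline{\mathbf{h}}_K)+e$ with $\|e\|\le\delta$. Let $\mathcal{S}^*\in\mathfrak{M}$ and $\mathbf{h}^*\in\mathbb{R}^{S\times K}_{\mathcal{S}^*}$, and set $\eta=\|M_1(\mathbf{h}^*_1)\cdots M_K(\mathbf{h}^*_K)-X\|$. If $\eta+\delta\le\rho$, then $$\|P(\mathbf{h}^* )-P(\overline{\mathbf{h}})\|\le\frac{\gamma}{\sigma_{\mathfrak{M}}}(\delta+\eta).$$ Moreover, if $\frac{\gamma}{\sigma_{\mathfrak{M}}}(\delta+\eta)\le\frac12\max\left(\|P(\mathbf{h}^* )\|_\infty,\|P(\overline{\mathbf{h}})\|_\infty\right)$, then for every $p\in[1,\infty]$, $$d_p([\mathbf{h}^*],[\overline{\mathbf{h}}])\le 7(KS)^{\frac1p}\min\left(\|P(\overline{\mathbf{h}})\|_\infty^{\frac1K-1},\|P(\mathbf{h}^* )\|_\infty^{\frac1K-1}\right)\frac{\gamma}{\sigma_{\mathfrak{M}}}(\delta+\eta).$$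
   Context: Let $K,S\ge 1$ and $m_1,\dots,m_{K+1}$ be positive integers, $\mathbb{N}_S=\{1,\dots,S\}$, and for $k=1,\dots,K$ let $M_k:\mathbb{R}^S\to\mathbb{R}^{m_k\times m_{k+1}}$ be linear. Parameters are $\mathbf{h}=(\mathbf{h}_1,\dots,\mathbf{h}_K)\in\mathbb{R}^{S\times K}$, $\mathbf{h}_k\in\mathbb{R}^S$ with entries $\mathbf{h}_{k,i}$. $\mathbb{R}^{S^K}$ is the space of real order-$K$ tensors with all axes of size $S$, indexed by $\mathbf{i}\in\mathbb{N}_S^K$; $\|\cdot\|$ is the Euclidean norm and $\|\cdot\|_p$ the entrywise $\ell^p$ norm (for vectors, tensors and parameters alike). Segre embedding: $P(\mathbf{h})_{\mathbf{i}}=\mathbf{h}_{1,\mathbf{i}_1}\cdots\mathbf{h}_{K,\mathbf{i}_K}$. The lifting operator $\mathcal{A}:\mathbb{R}^{S^K}\to\mathbb{R}^{m_1\times m_{K+1}}$ is the unique linear map with $\mathcal{A}P(\mathbf{h})=M_1(\mathbf{h}_1)\cdots M_K(\mathbf{h}_K)$ for all $\mathbf{h}$; matrices carry the Frobenius norm. A support is $\mathcal{S}=(\mathcal{S}_1,\dots,\mathcal{S}_K)$, $\mathcal{S}_k\subset\mathbb{N}_S$; unions are componentwise; $\mathbf{i}\in\mathcal{S}$ means $\mathbf{i}_k\in\mathcal{S}_k$ for all $k$. $\mathbb{R}^{S\times K}_{\mathcal{S}}=\{\mathbf{h}:\mathbf{h}_{k,i}=0\text{ whenever }i\notin\mathcal{S}_k\}$,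 $\mathbb{T}_{\mathcal{S}}=\{T: T_{\mathbf{i}}=0\text{ whenever }\mathbf{i}\notin\mathcal{S}\}$, $P_{\mathcal{S}}$ the orthogonal projection onto $\mathbb{T}_{\mathcal{S}}$, and $\mathcal{A}_{\mathcal{S}}=\mathcal{A}P_{\mathcal{S}}$. $\mathfrak{M}$ is a given finite family of supports. Deep-$\mathfrak{M}$-Null Space Property with constants $(\gamma,\rho)$, $\gamma\ge1,\rho>0$: for all $\mathcal{S},\mathcal{S}'\in\mathfrak{M}$, every $T\in P(\mathbb{R}^{S\times K}_{\mathcal{S}})+P(\mathbb{R}^{S\times K}_{\mathcal{S}'})$ with $\|\mathcal{A}_{\mathcal{S}\cup\mathcal{S}'}T\|\le\rho$ and every $T'\in\ker\mathcal{A}_{\mathcal{S}\cup\mathcal{S}'}$ satisfy $\|T\|\le\gamma\|T-P_{\mathcal{S}\cup\mathcal{S}'}T'\|$. Deep-lower-RIP constant: a number $\sigma_{\mathfrak{M}}>0$ such that for all $\mathcal{S},\mathcal{S}'\in\mathfrak{M}$ and all $T$ in the orthogonal complement of $\ker\mathcal{A}_{\mathcal{S}\cup\mathcal{S}'}$, $\sigma_{\mathfrak{M}}\|P_{\mathcal{S}\cup\mathcal{S}'}T\|\le\|\mathcal{A}_{\mathcal{S}\cup\mathcal{S}'}T\|$. Metric $d_p$: let $\mathbb{R}^{S\times K}_*=\{\mathbf{h}:\mathbf{h}_k\ne0\ \forall k\}$; $\mathbf{h}\sim\mathbf{g}$ iff there are $\lambda_1,\dots,\lambda_K\in\mathbb{R}$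 with $\prod_k\lambda_k=1$ and $\mathbf{h}_k=\lambda_k\mathbf{g}_k$ for all $k$; $[\mathbf{h}]$ is the class of $\mathbf{h}$. With $\mathbb{R}^{S\times K}_{diag}=\{\mathbf{h}\in\mathbb{R}^{S\times K}_*:\|\mathbf{h}_k\|_\infty=\|\mathbf{h}_1\|_\infty\ \forall k\}$, define for $\mathbf{h},\mathbf{g}\in\mathbb{R}^{S\times K}_*$: $d_p([\mathbf{h}],[\mathbf{g}])=\inf\{\|\mathbf{h}'-\mathbf{g}'\|_p:\mathbf{h}'\in[\mathbf{h}]\cap\mathbb{R}^{S\times K}_{diag},\ \mathbf{g}'\in[\mathbf{g}]\cap\mathbb{R}^{S\times K}_{diag}\}$. *)

theory Defs
  imports Complex_Main "HOL-Library.Extended_Real" "Jordan_Normal_Form.Matrix"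
begin

(* Conventions: axes/layers k range over {1..K}, coordinates i over {1..S}.
   A parameter h :: nat => nat => real is (h k i) = h_{k,i}; values outside the
   index range are required to be 0 (extensional representation).
   A tensor T :: (nat => nat) => real is indexed by i in PiE {1..K} (%_. {1..S})
   and is required to vanish outside that index set.
   A support is a function nat => nat set (component k = S_k). *)

definition idx :: "nat \<Rightarrow> nat \<Rightarrow> (nat \<Rightarrow> nat) set" where
  "idx K S = PiE {1..K} (\<lambda>_. {1..S})"

definition tensors :: "nat \<Rightarrow> nat \<Rightarrow> ((nat \<Rightarrow> nat) \<Rightarrow> real) set" where
  "tensors K S = {T. \<forall>i. i \<notin> idx K S \<longrightarrow> T i = 0}"

definition params :: "nat \<Rightarrow> nat \<Rightarrow> (nat \<Rightarrow> nat \<Rightarrow> real) set" where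
  "params K S = {h. \<forall>k i. (k \<notin> {1..K} \<or> i \<notin> {1..S}) \<longrightarrow> h k i = 0}"

definition params_supp :: "nat \<Rightarrow> nat \<Rightarrow> (nat \<Rightarrow> nat set) \<Rightarrow> (nat \<Rightarrow> nat \<Rightarrow> real) set" where
  "params_supp K S Sp = {h \<in> params K S. \<forall>k\<in>{1..K}. \<forall>i\<in>{1..S}. i \<notin> Sp k \<longrightarrow> h k i = 0}"

definition params_nz :: "nat \<Rightarrow> nat \<Rightarrow> (nat \<Rightarrow> nat \<Rightarrow> real) set" where
  "params_nz K S = {h \<in> params K S. \<forall>k\<in>{1..K}. \<exists>i\<in>{1..S}. h k i \<noteq> 0}"

definition segre :: "nat \<Rightarrow> nat \<Rightarrow> (nat \<Rightarrow> nat \<Rightarrow> real) \<Rightarrow> (nat \<Rightarrow> nat) \<Rightarrow> real" where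
  "segre K S h = (\<lambda>i. if i \<in> idx K S then (\<Prod>k=1..K. h k (i k)) else 0)"

definition tnorm :: "nat \<Rightarrow> nat \<Rightarrow> ((nat \<Rightarrow> nat) \<Rightarrow> real) \<Rightarrow> real" where
  "tnorm K S T = sqrt (\<Sum>i\<in>idx K S. (T i)\<^sup>2)"

definition tinner :: "nat \<Rightarrow> nat \<Rightarrow> ((nat \<Rightarrow> nat) \<Rightarrow> real) \<Rightarrow> ((nat \<Rightarrow> nat) \<Rightarrow> real) \<Rightarrow> real" where
  "tinner K S T T' = (\<Sum>i\<in>idx K S. T i * T' i)"

definition tinfnorm :: "nat \<Rightarrow> nat \<Rightarrow> ((nat \<Rightarrow> nat) \<Rightarrow> real) \<Rightarrow> real" where
  "tinfnorm K S T = Max ((\<lambda>i. \<bar>T i\<bar>) ` idx K S)"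

definition supp_un :: "(nat \<Rightarrow> nat set) \<Rightarrow> (nat \<Rightarrow> nat set) \<Rightarrow> nat \<Rightarrow> nat set" where
  "supp_un Sp Sp' = (\<lambda>k. Sp k \<union> Sp' k)"

definition tproj :: "nat \<Rightarrow> nat \<Rightarrow> (nat \<Rightarrow> nat set) \<Rightarrow> ((nat \<Rightarrow> nat) \<Rightarrow> real) \<Rightarrow> (nat \<Rightarrow> nat) \<Rightarrow> real" where
  "tproj K S Sp T = (\<lambda>i. if i \<in> idx K S \<and> (\<forall>k\<in>{1..K}. i k \<in> Sp k) then T i else 0)"

definition fnorm :: "real mat \<Rightarrow> real" where
  "fnorm A = sqrt (\<Sum>r<dim_row A. \<Sum>c<dim_col A. (A $$ (r, c))\<^sup>2)"

definition mat_chain :: "nat \<Rightarrow> (nat \<Rightarrow> real mat) \<Rightarrow> real mat" where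
  "mat_chain K F = foldl (\<lambda>acc k. acc * F k) (F 1) [2..<K+1]"

definition layer_prod :: "nat \<Rightarrow> (nat \<Rightarrow> (nat \<Rightarrow> real) \<Rightarrow> real mat) \<Rightarrow> (nat \<Rightarrow> nat \<Rightarrow> real) \<Rightarrow> real mat" where
  "layer_prod K M h = mat_chain K (\<lambda>k. M k (h k))"

definition unitv :: "nat \<Rightarrow> nat \<Rightarrow> real" where
  "unitv j = (\<lambda>l. if l = j then 1 else 0)"

(* Lifting operator: the linear map with A(P(h)) = M_1(h_1)...M_K(h_K),
   written out explicitly via the standard tensor basis:
   A T = sum_i T_i * M_1(e_{i_1}) ... M_K(e_{i_K}). *)
definition lift :: "nat \<Rightarrow> nat \<Rightarrow> (nat \<Rightarrow> nat) \<Rightarrow> (nat \<Rightarrow> (nat \<Rightarrow> real) \<Rightarrow> real mat)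
    \<Rightarrow> ((nat \<Rightarrow> nat) \<Rightarrow> real) \<Rightarrow> real mat" where
  "lift K S m M T = mat (m 1) (m (K+1))
     (\<lambda>(r, c). \<Sum>i\<in>idx K S. T i * (layer_prod K M (\<lambda>k. unitv (i k))) $$ (r, c))"

definition lift_supp :: "nat \<Rightarrow> nat \<Rightarrow> (nat \<Rightarrow> nat) \<Rightarrow> (nat \<Rightarrow> (nat \<Rightarrow> real) \<Rightarrow> real mat)
    \<Rightarrow> (nat \<Rightarrow> nat set) \<Rightarrow> ((nat \<Rightarrow> nat) \<Rightarrow> real) \<Rightarrow> real mat" where
  "lift_supp K S m M Sp T = lift K S m M (tproj K S Sp T)"

definition deep_nsp :: "nat \<Rightarrow> nat \<Rightarrow> (nat \<Rightarrow> nat) \<Rightarrow> (nat \<Rightarrow> (nat \<Rightarrow> real) \<Rightarrow> real mat)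
    \<Rightarrow> (nat \<Rightarrow> nat set) set \<Rightarrow> real \<Rightarrow> real \<Rightarrow> bool" where
  "deep_nsp K S m M Ms \<gamma> \<rho> \<longleftrightarrow> \<gamma> \<ge> 1 \<and> \<rho> > 0 \<and>
     (\<forall>Sp\<in>Ms. \<forall>Sp'\<in>Ms. \<forall>T.
        (\<exists>h g. h \<in> params_supp K S Sp \<and> g \<in> params_supp K S Sp' \<and>
               T = (\<lambda>i. segre K S h i + segre K S g i)) \<longrightarrow>
        fnorm (lift_supp K S m M (supp_un Sp Sp') T) \<le> \<rho> \<longrightarrow>
        (\<forall>T'\<in>tensors K S. lift_supp K S m M (supp_un Sp Sp') T' = 0\<^sub>m (m 1) (m (K+1)) \<longrightarrow>
           tnorm K S T \<le> \<gamma> * tnorm K S (\<lambda>i. T i - tproj K S (supp_un Sp Sp') T' i)))"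

definition deep_lower_rip :: "nat \<Rightarrow> nat \<Rightarrow> (nat \<Rightarrow> nat) \<Rightarrow> (nat \<Rightarrow> (nat \<Rightarrow> real) \<Rightarrow> real mat)
    \<Rightarrow> (nat \<Rightarrow> nat set) set \<Rightarrow> real \<Rightarrow> bool" where
  "deep_lower_rip K S m M Ms \<sigma> \<longleftrightarrow> \<sigma> > 0 \<and>
     (\<forall>Sp\<in>Ms. \<forall>Sp'\<in>Ms. \<forall>T\<in>tensors K S.
        (\<forall>T'\<in>tensors K S. lift_supp K S m M (supp_un Sp Sp') T' = 0\<^sub>m (m 1) (m (K+1))
            \<longrightarrow> tinner K S T T' = 0) \<longrightarrow>
        \<sigma> * tnorm K S (tproj K S (supp_un Sp Sp') T) \<le> fnorm (lift_supp K S m M (supp_un Sp Sp') T))"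

definition layer_inf :: "nat \<Rightarrow> (nat \<Rightarrow> nat \<Rightarrow> real) \<Rightarrow> nat \<Rightarrow> real" where
  "layer_inf S h k = Max ((\<lambda>i. \<bar>h k i\<bar>) ` {1..S})"

definition pclass :: "nat \<Rightarrow> nat \<Rightarrow> (nat \<Rightarrow> nat \<Rightarrow> real) \<Rightarrow> (nat \<Rightarrow> nat \<Rightarrow> real) set" where
  "pclass K S h = {g \<in> params_nz K S. \<exists>lam::nat \<Rightarrow> real. (\<Prod>k=1..K. lam k) = 1 \<and>
       (\<forall>k\<in>{1..K}. \<forall>i\<in>{1..S}. g k i = lam k * h k i)}"

definition params_diag :: "nat \<Rightarrow> nat \<Rightarrow> (nat \<Rightarrow> nat \<Rightarrow> real) set" where
  "params_diag K S = {h \<in> params_nz K S. \<forall>k\<in>{1..K}. layer_inf S h k = layer_inf S h 1}"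

definition pnorm :: "nat \<Rightarrow> nat \<Rightarrow> ereal \<Rightarrow> (nat \<Rightarrow> nat \<Rightarrow> real) \<Rightarrow> real" where
  "pnorm K S p h = (if p = \<infinity> then Max ((\<lambda>(k, i). \<bar>h k i\<bar>) ` ({1..K} \<times> {1..S}))
     else (\<Sum>k=1..K. \<Sum>i=1..S. \<bar>h k i\<bar> powr real_of_ereal p) powr (1 / real_of_ereal p))"

definition inv_p :: "ereal \<Rightarrow> real" where
  "inv_p p = (if p = \<infinity> then 0 else 1 / real_of_ereal p)"

definition dist_p :: "nat \<Rightarrow> nat \<Rightarrow> ereal \<Rightarrow> (nat \<Rightarrow> nat \<Rightarrow> real) \<Rightarrow> (nat \<Rightarrow> nat \<Rightarrow> real) \<Rightarrow> real" where
  "dist_p K S p h g = Inf {pnorm K S p (\<lambda>k i. h' k i - g' k i) | h' g'.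
       h' \<in> pclass K S h \<inter> params_diag K S \<and> g' \<in> pclass K S g \<inter> params_diag K S}"

end

theory Submission
  imports Defs "HOL-Analysis.L2_Norm"
begin

(* Write U for the union of the two supports and T = P(hstar) - P(hbar). Negating the first
   layer of hbar shows T is a sum of two Segre tensors supported in U, and A_U T = M(hstar) - M(hbar)
   = (M(hstar) - X) + e has norm at most eta + delta <= rho. Split T = T2 + (T - T2) with T2 in the
   orthogonal complement of ker A_U: the null space property applied to T' = T - T2 gives
   ||T|| <= gamma ||P_U T2||, and the lower RIP gives sigma ||P_U T2|| <= ||A_U T2|| = ||A_U T||.

   For the distance, let N >= N' be the sup-norms of the two Segre tensors, which agree up to
   eps = gamma/sigma (delta + eta) entrywise, with eps <= N/2. Rescale the parameters so that every
   layer has sup-norm N^(1/K), resp. N'^(1/K), choosing signs so that both agree in sign along an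
   index js at which every layer of the larger one is maximal. Comparing the Segre tensors at js
   and at js with one coordinate changed bounds every layer difference by 2 eps N^(1/K - 1), and
   the l^p norm over the K S entries adds the factor (K S)^(1/p). *)

section \<open>Products of layer matrices\<close>

lemma mat_chain_Suc: "K \<ge> 1 \<Longrightarrow> mat_chain (Suc K) F = mat_chain K F * F (Suc K)"
  unfolding mat_chain_def by (simp add: upt_Suc_append)

lemma mat_chain_cong:
  "K \<ge> 1 \<Longrightarrow> (\<And>k. k \<in> {1..K} \<Longrightarrow> F k = G k) \<Longrightarrow> mat_chain K F = mat_chain K G"
proof (induction K rule: dec_induct)
  case base
  then show ?case by (simp add: mat_chain_def)
next
  case (step K)
  then show ?case by (simp add: mat_chain_Suc)
qed

lemma index_mult_mat_sum:
  assumes "A \<in> carrier_mat n p" "B \<in> carrier_mat p q" "r < n" "c < q"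
  shows "(A * B) $$ (r, c) = (\<Sum>l<p. A $$ (r, l) * B $$ (l, c))"
  using assms by (auto simp: scalar_prod_def lessThan_atLeast0 intro!: sum.cong)

lemma sum_PiE_insert:
  assumes "a \<notin> A"
  shows "(\<Sum>i\<in>PiE (insert a A) B. f i) = (\<Sum>y\<in>B a. \<Sum>g\<in>PiE A B. f (g(a := y)))"
  using assms by (simp add: PiE_insert_eq sum.reindex inj_combinator sum.cartesian_product)
    (intro sum.cong, auto)

lemma sum_product_swap:
  fixes f g :: "_ \<Rightarrow> _ \<Rightarrow> 'a::comm_semiring_0"
  shows "(\<Sum>l\<in>L. (\<Sum>x\<in>A. f x l) * (\<Sum>y\<in>B. g y l)) = (\<Sum>y\<in>B. \<Sum>x\<in>A. \<Sum>l\<in>L. f x l * g y l)"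
  by (simp add: sum_product sum.swap[of _ L] sum.swap[of _ A B])

locale linear_layers =
  fixes K S :: nat and m :: "nat \<Rightarrow> nat" and M :: "nat \<Rightarrow> (nat \<Rightarrow> real) \<Rightarrow> real mat"
  assumes K: "K \<ge> 1"
    and M_dim: "\<forall>k\<in>{1..K}. \<forall>v. M k v \<in> carrier_mat (m k) (m (Suc k))"
    and M_fun: "\<forall>k\<in>{1..K}. \<forall>v w. (\<forall>i\<in>{1..S}. v i = w i) \<longrightarrow> M k v = M k w"
    and M_add: "\<forall>k\<in>{1..K}. \<forall>v w. M k (\<lambda>i. v i + w i) = M k v + M k w"
    and M_smult: "\<forall>k\<in>{1..K}. \<forall>a v. M k (\<lambda>i. a * v i) = a \<cdot>\<^sub>m M k v"
begin

lemma layer_entry_sum: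
  assumes k: "k \<in> {1..K}" and l: "l < m k" and c: "c < m (Suc k)" and J: "finite J"
  shows "M k (\<lambda>i. \<Sum>j\<in>J. a j * unitv j i) $$ (l, c) = (\<Sum>j\<in>J. a j * M k (unitv j) $$ (l, c))"
  using J
proof (induction J rule: finite_induct)
  case empty
  have "M k (\<lambda>i. 0 * unitv 0 i) = 0 \<cdot>\<^sub>m M k (unitv 0)"
    using M_smult k by blast
  moreover have "M k (unitv 0) \<in> carrier_mat (m k) (m (Suc k))"
    using M_dim k by blast
  ultimately show ?case using l c by simp
next
  case (insert x J)
  have "M k (\<lambda>i. \<Sum>j\<in>insert x J. a j * unitv j i)
      = M k (\<lambda>i. a x * unitv x i) + M k (\<lambda>i. \<Sum>j\<in>J. a j * unitv j i)"
    using insert.hyps M_add k by simp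
  also have "M k (\<lambda>i. a x * unitv x i) = a x \<cdot>\<^sub>m M k (unitv x)"
    using M_smult k by blast
  moreover have "M k (\<lambda>i. \<Sum>j\<in>J. a j * unitv j i) \<in> carrier_mat (m k) (m (Suc k))"
    and "M k (unitv x) \<in> carrier_mat (m k) (m (Suc k))"
    using M_dim k by blast+
  ultimately show ?case using insert l c by simp
qed

lemma layer_entry_expand:
  assumes "k \<in> {1..K}" "l < m k" "c < m (Suc k)"
  shows "M k v $$ (l, c) = (\<Sum>j\<in>{1..S}. v j * M k (unitv j) $$ (l, c))"
proof -
  have M_eq: "M k v = M k w" if "\<forall>i\<in>{1..S}. v i = w i" for w
    using M_fun assms(1) that by blast
  have "M k v = M k (\<lambda>i. \<Sum>j\<in>{1..S}. v j * unitv j i)"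
    by (rule M_eq) (auto simp: unitv_def if_distrib cong: if_cong)
  then show ?thesis using layer_entry_sum[OF assms] by simp
qed

lemma mat_chain_carrier:
  "1 \<le> n \<Longrightarrow> n \<le> K \<Longrightarrow> mat_chain n (\<lambda>k. M k (v k)) \<in> carrier_mat (m 1) (m (Suc n))"
proof (induction n rule: dec_induct)
  case base
  then show ?case using M_dim K by (simp add: mat_chain_def)
next
  case (step n)
  then show ?case using M_dim by (simp add: mat_chain_Suc)
qed

lemma layer_prod_carrier: "layer_prod K M h \<in> carrier_mat (m 1) (m (Suc K))"
  unfolding layer_prod_def using mat_chain_carrier K by simp

lemma mat_chain_multilinear:
  assumes "1 \<le> n" "n \<le> K" "r < m 1" "c < m (Suc n)"
  shows "(\<Sum>i\<in>PiE {1..n} (\<lambda>_. {1..S}).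
            (\<Prod>k=1..n. h k (i k)) * mat_chain n (\<lambda>k. M k (unitv (i k))) $$ (r, c))
         = mat_chain n (\<lambda>k. M k (h k)) $$ (r, c)"
  using assms
proof (induction n arbitrary: c rule: dec_induct)
  case base
  then show ?case
    using layer_entry_expand[of 1 r c "h 1"] K by (simp add: sum_PiE_insert mat_chain_def)
next
  case (step n)
  let ?G = "PiE {1..n} (\<lambda>_. {1..S})"
  let ?X = "\<lambda>g. mat_chain n (\<lambda>k. M k (unitv (g k)))"
  let ?Y = "\<lambda>y. M (Suc n) (unitv y)"
  let ?a = "\<lambda>g. \<Prod>k=1..n. h k (g k)"
  let ?p = "m (Suc n)"
  have X_dim: "?X g \<in> carrier_mat (m 1) ?p" for g
    using mat_chain_carrier step by simp
  have Y_dim: "M (Suc n) v \<in> carrier_mat ?p (m (Suc (Suc n)))" for v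
    using M_dim step by simp
  have ins: "{1..Suc n} = insert (Suc n) {1..n}" and notin_Suc: "Suc n \<notin> {1..n}"
    by auto
  have entry: "(\<Prod>k=1..Suc n. h k ((g(Suc n := y)) k))
        * mat_chain (Suc n) (\<lambda>k. M k (unitv ((g(Suc n := y)) k))) $$ (r, c)
      = (\<Sum>l<?p. ?a g * ?X g $$ (r, l) * (h (Suc n) y * ?Y y $$ (l, c)))" for g y
  proof -
    have "mat_chain n (\<lambda>k. M k (unitv ((g(Suc n := y)) k))) = ?X g"
      by (rule mat_chain_cong[OF step.hyps(1)]) auto
    then have "mat_chain (Suc n) (\<lambda>k. M k (unitv ((g(Suc n := y)) k))) = ?X g * ?Y y"
      using step.hyps(1) by (simp add: mat_chain_Suc)
    moreover have "(\<Prod>k=1..Suc n. h k ((g(Suc n := y)) k)) = ?a g * h (Suc n) y"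
      by (simp add: ins)
    ultimately show ?thesis
      using index_mult_mat_sum[OF X_dim Y_dim] step.prems
      by (simp add: sum_distrib_left mult_ac)
  qed
  have "(\<Sum>i\<in>PiE {1..Suc n} (\<lambda>_. {1..S}).
          (\<Prod>k=1..Suc n. h k (i k)) * mat_chain (Suc n) (\<lambda>k. M k (unitv (i k))) $$ (r, c))
      = (\<Sum>y\<in>{1..S}. \<Sum>g\<in>?G. \<Sum>l<?p. ?a g * ?X g $$ (r, l) * (h (Suc n) y * ?Y y $$ (l, c)))"
    unfolding ins[THEN arg_cong[where f = "\<lambda>A. PiE A (\<lambda>_. {1..S})"]]
      sum_PiE_insert[of "Suc n" "{1..n}", OF notin_Suc] entry by simp
  also have "\<dots> = (\<Sum>l<?p. (\<Sum>g\<in>?G. ?a g * ?X g $$ (r, l)) * (\<Sum>y\<in>{1..S}. h (Suc n) y * ?Y y $$ (l, c)))"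
    by (rule sum_product_swap[symmetric])
  also have "\<dots> = (\<Sum>l<?p. mat_chain n (\<lambda>k. M k (h k)) $$ (r, l) * M (Suc n) (h (Suc n)) $$ (l, c))"
    using step layer_entry_expand[of "Suc n" _ c "h (Suc n)"] by (intro sum.cong) auto
  also have "\<dots> = mat_chain (Suc n) (\<lambda>k. M k (h k)) $$ (r, c)"
    using index_mult_mat_sum[OF mat_chain_carrier Y_dim] step by (simp add: mat_chain_Suc)
  finally show ?case .
qed

lemma lift_segre: "r < m 1 \<Longrightarrow> c < m (Suc K) \<Longrightarrow>
   lift K S m M (segre K S h) $$ (r, c) = layer_prod K M h $$ (r, c)"
  using mat_chain_multilinear[of K r c h] K
  by (simp add: lift_def segre_def idx_def layer_prod_def)

end

section \<open>Orthogonal projection onto a finite span\<close>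

definition inner_on :: "'a set \<Rightarrow> ('a \<Rightarrow> real) \<Rightarrow> ('a \<Rightarrow> real) \<Rightarrow> real" where
  "inner_on I f g = (\<Sum>i\<in>I. f i * g i)"

definition lin_comb :: "('b \<Rightarrow> real) \<Rightarrow> 'b set \<Rightarrow> ('b \<Rightarrow> 'a \<Rightarrow> real) \<Rightarrow> 'a \<Rightarrow> real" where
  "lin_comb d B v = (\<lambda>i. \<Sum>b\<in>B. d b * v b i)"

lemma inner_on_diff_left: "inner_on I (\<lambda>i. f i - g i) h = inner_on I f h - inner_on I g h"
  unfolding inner_on_def by (simp add: algebra_simps sum_subtractf)

lemma inner_on_add_right: "inner_on I f (\<lambda>i. g i + h i) = inner_on I f g + inner_on I f h"
  unfolding inner_on_def by (simp add: algebra_simps sum.distrib)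

lemma inner_on_scale_left: "inner_on I (\<lambda>i. a * f i) h = a * inner_on I f h"
  unfolding inner_on_def by (simp add: algebra_simps sum_distrib_left)

lemma inner_on_lin_comb_right:
  assumes "\<And>b. b \<in> B \<Longrightarrow> inner_on I f (v b) = 0"
  shows "inner_on I f (lin_comb d B v) = 0"
proof -
  have "inner_on I f (lin_comb d B v) = (\<Sum>b\<in>B. d b * inner_on I f (v b))"
    unfolding inner_on_def lin_comb_def
    by (simp add: sum_distrib_left mult_ac) (rule sum.swap)
  then show ?thesis using assms by simp
qed

lemma inner_on_eq_0_if_self_eq_0:
  assumes "finite I" "inner_on I r r = 0"
  shows "inner_on I f r = 0"
proof -
  have "\<forall>i\<in>I. r i = 0"
    using assms by (simp add: inner_on_def sum_nonneg_eq_0_iff flip: power2_eq_square)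
  then show ?thesis by (simp add: inner_on_def)
qed

text \<open>Gram--Schmidt without normalisation, so the vectors may be linearly dependent.\<close>

lemma orthogonal_projection_exists:
  assumes I: "finite I" and B: "finite B"
  shows "\<exists>d. \<forall>b\<in>B. inner_on I (\<lambda>i. x i - lin_comb d B v i) (v b) = 0"
  using B
proof (induction B arbitrary: x rule: finite_induct)
  case empty
  then show ?case by simp
next
  case (insert b B)
  obtain db where db: "\<forall>c\<in>B. inner_on I (\<lambda>i. v b i - lin_comb db B v i) (v c) = 0"
    using insert.IH by blast
  obtain dx where dx: "\<forall>c\<in>B. inner_on I (\<lambda>i. x i - lin_comb dx B v i) (v c) = 0"
    using insert.IH by blast
  define r where "r = (\<lambda>i. v b i - lin_comb db B v i)"
  define z where "z = (\<lambda>i. x i - lin_comb dx B v i)"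
  \<comment> \<open>If r vanishes on I, the division by zero makes \<alpha> = 0, which is still correct.\<close>
  define \<alpha> where "\<alpha> = inner_on I z r / inner_on I r r"
  define d where "d = (\<lambda>c. dx c - \<alpha> * db c)(b := \<alpha>)"
  have comb: "lin_comb d (insert b B) v i = lin_comb dx B v i + \<alpha> * r i" for i
  proof -
    have "lin_comb d B v i = (\<Sum>c\<in>B. (dx c - \<alpha> * db c) * v c i)"
      using insert.hyps unfolding lin_comb_def d_def by (intro sum.cong) auto
    also have "\<dots> = lin_comb dx B v i - \<alpha> * lin_comb db B v i"
      unfolding lin_comb_def by (simp add: sum_subtractf sum_distrib_left algebra_simps)
    finally have "lin_comb d B v i = lin_comb dx B v i - \<alpha> * lin_comb db B v i" .
    then show ?thesis
      using insert.hyps by (simp add: lin_comb_def d_def r_def algebra_simps)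
  qed
  define z' where "z' = (\<lambda>i. z i - \<alpha> * r i)"
  have residual: "(\<lambda>i. x i - lin_comb d (insert b B) v i) = z'"
    unfolding z'_def z_def comb by (simp add: algebra_simps)
  have z'_B: "inner_on I z' (v c) = 0" if "c \<in> B" for c
    using that db dx unfolding z'_def z_def r_def by (simp add: inner_on_diff_left inner_on_scale_left)
  have z'_r: "inner_on I z' r = 0"
    using inner_on_eq_0_if_self_eq_0[OF I, of r z]
    unfolding z'_def inner_on_diff_left inner_on_scale_left \<alpha>_def by auto
  have "v b = (\<lambda>i. lin_comb db B v i + r i)"
    unfolding r_def by simp
  then have z'_b: "inner_on I z' (v b) = 0"
    using inner_on_lin_comb_right[of B I z' v db] z'_B z'_r by (simp add: inner_on_add_right)
  show ?case
    using z'_B z'_b by (intro exI[of _ d]) (simp add: residual)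
qed

section \<open>Stability of the lifted problem\<close>

lemma finite_idx: "finite (idx K S)"
  unfolding idx_def by (simp add: finite_PiE)

lemma idx_mem: "i \<in> idx K S \<Longrightarrow> k \<in> {1..K} \<Longrightarrow> i k \<in> {1..S}"
  unfolding idx_def by (auto simp: PiE_def Pi_def)

lemma segre_outside_support:
  assumes "h \<in> params_supp K S Sp" "i \<in> idx K S" "k \<in> {1..K}" "i k \<notin> Sp k"
  shows "segre K S h i = 0"
proof -
  have "h k (i k) = 0"
    using assms idx_mem[of i K S k] by (auto simp: params_supp_def)
  then show ?thesis
    using assms by (auto simp: segre_def intro: prod_zero)
qed

lemma segre_sum_tproj:
  assumes h: "h \<in> params_supp K S Sp" and g: "g \<in> params_supp K S Sp'"
  shows "tproj K S (supp_un Sp Sp') (\<lambda>i. segre K S h i + segre K S g i)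
       = (\<lambda>i. segre K S h i + segre K S g i)"
proof
  fix i
  show "tproj K S (supp_un Sp Sp') (\<lambda>i. segre K S h i + segre K S g i) i = segre K S h i + segre K S g i"
  proof (cases "i \<in> idx K S \<and> (\<forall>k\<in>{1..K}. i k \<in> supp_un Sp Sp' k)")
    case False
    show ?thesis
    proof (cases "i \<in> idx K S")
      case True
      then obtain k where "k \<in> {1..K}" "i k \<notin> Sp k" "i k \<notin> Sp' k"
        using False by (auto simp: supp_un_def)
      then show ?thesis
        using True segre_outside_support[OF h] segre_outside_support[OF g] by (simp add: tproj_def)
    qed (simp add: tproj_def segre_def)
  qed (simp add: tproj_def)
qed

lemma segre_negate_first_layer:
  assumes "K \<ge> 1"
  shows "segre K S (\<lambda>k i. if k = 1 then - h k i else h k i) = (\<lambda>i. - segre K S h i)"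
proof
  fix i
  have "(\<Prod>k=1..K. (if k = 1 then - h k (i k) else h k (i k))) = - (\<Prod>k=1..K. h k (i k))"
    using assms by (simp add: prod.atLeast_Suc_atMost)
  then show "segre K S (\<lambda>k i. if k = 1 then - h k i else h k i) i = - segre K S h i"
    by (simp add: segre_def)
qed

definition lift_row ::
    "nat \<Rightarrow> nat \<Rightarrow> (nat \<Rightarrow> (nat \<Rightarrow> real) \<Rightarrow> real mat) \<Rightarrow> (nat \<Rightarrow> nat set) \<Rightarrow> nat \<times> nat
      \<Rightarrow> (nat \<Rightarrow> nat) \<Rightarrow> real" where
  "lift_row K S M U rc = tproj K S U (\<lambda>i. layer_prod K M (\<lambda>k. unitv (i k)) $$ rc)"

lemma lift_supp_entry:
  "r < m 1 \<Longrightarrow> c < m (Suc K) \<Longrightarrow>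
   lift_supp K S m M U T $$ (r, c) = inner_on (idx K S) T (lift_row K S M U (r, c))"
  unfolding lift_supp_def lift_def lift_row_def inner_on_def tproj_def by (auto intro: sum.cong)

lemma lift_supp_carrier: "lift_supp K S m M U T \<in> carrier_mat (m 1) (m (Suc K))"
  by (simp add: lift_supp_def lift_def)

lemma lift_supp_kernel_decomposition:
  assumes T: "T \<in> tensors K S"
  obtains T2 where "T2 \<in> tensors K S"
    and "lift_supp K S m M U (\<lambda>i. T i - T2 i) = 0\<^sub>m (m 1) (m (K+1))"
    and "lift_supp K S m M U T2 = lift_supp K S m M U T"
    and "\<forall>T'\<in>tensors K S. lift_supp K S m M U T' = 0\<^sub>m (m 1) (m (K+1)) \<longrightarrow> tinner K S T2 T' = 0"
proof -
  let ?A = "lift_supp K S m M U"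
  let ?row = "lift_row K S M U"
  define B where "B = {..<m 1} \<times> {..<m (Suc K)}"
  have "finite B"
    by (simp add: B_def)
  then obtain d where d: "\<forall>rc\<in>B. inner_on (idx K S) (\<lambda>i. T i - lin_comb d B ?row i) (?row rc) = 0"
    using orthogonal_projection_exists[OF finite_idx, where x = T and v = ?row] by blast
  define T2 where "T2 = lin_comb d B ?row"
  have T2_tensor: "T2 \<in> tensors K S"
    by (simp add: tensors_def T2_def lin_comb_def lift_row_def tproj_def)
  have entry: "?A F $$ (r, c) = inner_on (idx K S) F (?row (r, c))"
    if "r < m 1" "c < m (Suc K)" for F r c
    using lift_supp_entry[OF that] .
  have residual: "inner_on (idx K S) (\<lambda>i. T i - T2 i) (?row (r, c)) = 0"
    if "r < m 1" "c < m (Suc K)" for r c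
    using d that by (simp add: T2_def B_def)
  have dims: "dim_row (?A F) = m 1" "dim_col (?A F) = m (Suc K)" for F
    using lift_supp_carrier[of K S m M U F] by auto
  have kernel: "?A (\<lambda>i. T i - T2 i) = 0\<^sub>m (m 1) (m (K+1))"
    by (rule eq_matI) (simp_all add: dims entry residual)
  have same: "?A T2 = ?A T"
  proof (rule eq_matI)
    fix r c
    assume "r < dim_row (?A T)" "c < dim_col (?A T)"
    then have rc: "r < m 1" "c < m (Suc K)"
      by (simp_all add: dims)
    show "?A T2 $$ (r, c) = ?A T $$ (r, c)"
      using residual[OF rc] by (simp add: entry[OF rc] inner_on_diff_left)
  qed (simp_all add: dims)
  have orthogonal: "tinner K S T2 T' = 0" if "?A T' = 0\<^sub>m (m 1) (m (K+1))" for T'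
  proof -
    have "inner_on (idx K S) T' (?row rc) = 0" if "rc \<in> B" for rc
    proof -
      obtain r c where rc: "rc = (r, c)" "r < m 1" "c < m (Suc K)"
        using \<open>rc \<in> B\<close> by (auto simp: B_def)
      show ?thesis
        using entry[OF rc(2,3), of T'] \<open>?A T' = _\<close> rc by simp
    qed
    then have "inner_on (idx K S) T' T2 = 0"
      unfolding T2_def by (rule inner_on_lin_comb_right)
    then show ?thesis by (simp add: tinner_def inner_on_def mult.commute)
  qed
  show thesis
    using that[OF T2_tensor kernel same] orthogonal by blast
qed

lemma deep_nspD:
  assumes "deep_nsp K S m M Ms \<gamma> \<rho>" "Sp \<in> Ms" "Sp' \<in> Ms"
    and "h \<in> params_supp K S Sp" "g \<in> params_supp K S Sp'"
    and "T = (\<lambda>i. segre K S h i + segre K S g i)"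
    and "fnorm (lift_supp K S m M (supp_un Sp Sp') T) \<le> \<rho>"
    and "T' \<in> tensors K S" "lift_supp K S m M (supp_un Sp Sp') T' = 0\<^sub>m (m 1) (m (K+1))"
  shows "tnorm K S T \<le> \<gamma> * tnorm K S (\<lambda>i. T i - tproj K S (supp_un Sp Sp') T' i)"
  using assms unfolding deep_nsp_def by blast

lemma deep_lower_ripD:
  assumes "deep_lower_rip K S m M Ms \<sigma>" "Sp \<in> Ms" "Sp' \<in> Ms" "T \<in> tensors K S"
    and "\<forall>T'\<in>tensors K S. lift_supp K S m M (supp_un Sp Sp') T' = 0\<^sub>m (m 1) (m (K+1))
           \<longrightarrow> tinner K S T T' = 0"
  shows "\<sigma> * tnorm K S (tproj K S (supp_un Sp Sp') T) \<le> fnorm (lift_supp K S m M (supp_un Sp Sp') T)"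
  using assms unfolding deep_lower_rip_def by blast

lemma nsp_rip_stability:
  assumes nsp: "deep_nsp K S m M Ms \<gamma> \<rho>" and rip: "deep_lower_rip K S m M Ms \<sigma>"
    and Sp: "Sp \<in> Ms" and Sp': "Sp' \<in> Ms"
    and h: "h \<in> params_supp K S Sp" and g: "g \<in> params_supp K S Sp'"
    and T: "T = (\<lambda>i. segre K S h i + segre K S g i)"
    and small: "fnorm (lift_supp K S m M (supp_un Sp Sp') T) \<le> \<rho>"
  shows "\<sigma> * tnorm K S T \<le> \<gamma> * fnorm (lift_supp K S m M (supp_un Sp Sp') T)"
proof -
  let ?U = "supp_un Sp Sp'"
  have T_tensor: "T \<in> tensors K S"
    using T by (simp add: tensors_def segre_def)
  obtain T2 where T2: "T2 \<in> tensors K S"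
    and ker: "lift_supp K S m M ?U (\<lambda>i. T i - T2 i) = 0\<^sub>m (m 1) (m (K+1))"
    and same: "lift_supp K S m M ?U T2 = lift_supp K S m M ?U T"
    and orth: "\<forall>T'\<in>tensors K S. lift_supp K S m M ?U T' = 0\<^sub>m (m 1) (m (K+1)) \<longrightarrow> tinner K S T2 T' = 0"
    using lift_supp_kernel_decomposition[OF T_tensor] by blast
  have diff_tensor: "(\<lambda>i. T i - T2 i) \<in> tensors K S"
    using T_tensor T2 by (simp add: tensors_def)
  have T_proj: "tproj K S ?U T = T"
    using segre_sum_tproj[OF h g] T by simp
  have T_out: "T i = 0" if "\<not> (i \<in> idx K S \<and> (\<forall>k\<in>{1..K}. i k \<in> ?U k))" for i
  proof -
    have "T i = tproj K S ?U T i"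
      by (simp add: T_proj)
    also have "\<dots> = 0"
      using that unfolding tproj_def by auto
    finally show ?thesis .
  qed
  have proj: "(\<lambda>i. T i - tproj K S ?U (\<lambda>i. T i - T2 i) i) = tproj K S ?U T2"
    by (auto simp: tproj_def fun_eq_iff T_out)
  have nsp_T: "tnorm K S T \<le> \<gamma> * tnorm K S (tproj K S ?U T2)"
    using deep_nspD[OF nsp Sp Sp' h g T small diff_tensor ker] by (simp only: proj)
  have rip_T2: "\<sigma> * tnorm K S (tproj K S ?U T2) \<le> fnorm (lift_supp K S m M ?U T)"
    using deep_lower_ripD[OF rip Sp Sp' T2 orth] by (simp only: same)
  have "\<sigma> > 0" "\<gamma> \<ge> 0"
    using nsp rip by (auto simp: deep_nsp_def deep_lower_rip_def)
  then have "\<sigma> * tnorm K S T \<le> \<gamma> * (\<sigma> * tnorm K S (tproj K S ?U T2))"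
    using nsp_T by (simp add: mult_left_mono mult.left_commute)
  also have "\<dots> \<le> \<gamma> * fnorm (lift_supp K S m M ?U T)"
    using rip_T2 \<open>\<gamma> \<ge> 0\<close> by (rule mult_left_mono)
  finally show ?thesis .
qed
lemma fnorm_add_le:
  assumes "A \<in> carrier_mat a b" "B \<in> carrier_mat a b"
  shows "fnorm (A + B) \<le> fnorm A + fnorm B"
proof -
  have fnorm_L2: "fnorm C = L2_set (\<lambda>(r, c). C $$ (r, c)) ({..<a} \<times> {..<b})"
    if "C \<in> carrier_mat a b" for C
    using that unfolding fnorm_def L2_set_def by (simp add: sum.cartesian_product case_prod_beta)
  have "fnorm (A + B) = L2_set (\<lambda>x. (\<lambda>(r, c). A $$ (r, c)) x + (\<lambda>(r, c). B $$ (r, c)) x) ({..<a} \<times> {..<b})"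
    using assms by (simp add: fnorm_L2 cong: L2_set_cong) (intro L2_set_cong, auto)
  also have "\<dots> \<le> fnorm A + fnorm B"
    using assms by (simp add: fnorm_L2 L2_set_triangle_ineq)
  finally show ?thesis .
qed

lemma (in linear_layers) segre_stability:
  fixes \<gamma> \<rho> \<sigma> \<delta> :: real
  assumes nsp: "deep_nsp K S m M Ms \<gamma> \<rho>" and rip: "deep_lower_rip K S m M Ms \<sigma>"
    and Sstar: "Sstar \<in> Ms" and hstar: "hstar \<in> params_supp K S Sstar"
    and Sbar: "Sbar \<in> Ms" and hbar: "hbar \<in> params_supp K S Sbar"
    and e: "e \<in> carrier_mat (m 1) (m (K+1))" and e_le: "fnorm e \<le> \<delta>"
    and X: "X = layer_prod K M hbar + e"
    and eta_le: "fnorm (layer_prod K M hstar - X) + \<delta> \<le> \<rho>"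
  shows "tnorm K S (\<lambda>i. segre K S hstar i - segre K S hbar i)
           \<le> \<gamma> / \<sigma> * (\<delta> + fnorm (layer_prod K M hstar - X))"
proof -
  define U where "U = supp_un Sstar Sbar"
  define T where "T = (\<lambda>i. segre K S hstar i - segre K S hbar i)"
  define g where "g = (\<lambda>k i. if k = 1 then - hbar k i else hbar k i)"
  define \<eta> where "\<eta> = fnorm (layer_prod K M hstar - X)"
  have g: "g \<in> params_supp K S Sbar"
    using hbar by (auto simp: g_def params_supp_def params_def)
  have T_sum: "T = (\<lambda>i. segre K S hstar i + segre K S g i)"
    unfolding T_def g_def segre_negate_first_layer[OF K] by simp
  have "tproj K S U T = T"
    unfolding U_def T_sum by (rule segre_sum_tproj[OF hstar g])
  then have "lift_supp K S m M U T = lift K S m M T"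
    by (simp add: lift_supp_def)
  also have "\<dots> = (layer_prod K M hstar - X) + e"
  proof (rule eq_matI)
    fix r c
    assume "r < dim_row ((layer_prod K M hstar - X) + e)" "c < dim_col ((layer_prod K M hstar - X) + e)"
    then have rc: "r < m 1" "c < m (Suc K)"
      using e by auto
    have "lift K S m M T $$ (r, c)
        = lift K S m M (segre K S hstar) $$ (r, c) - lift K S m M (segre K S hbar) $$ (r, c)"
      using rc by (simp add: lift_def T_def left_diff_distrib sum_subtractf)
    then show "lift K S m M T $$ (r, c) = ((layer_prod K M hstar - X) + e) $$ (r, c)"
      using rc e layer_prod_carrier[of hstar] layer_prod_carrier[of hbar]
      by (simp add: lift_segre X)
  qed (use e in \<open>simp_all add: lift_def\<close>)
  finally have lift_T: "lift_supp K S m M U T = (layer_prod K M hstar - X) + e" .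
  have "layer_prod K M hstar - X \<in> carrier_mat (m 1) (m (K+1))"
    using e X by (simp add: minus_carrier_mat)
  then have "fnorm (lift_supp K S m M U T) \<le> \<eta> + \<delta>"
    unfolding lift_T \<eta>_def using fnorm_add_le[OF _ e] e_le by fastforce
  then have "\<sigma> * tnorm K S T \<le> \<gamma> * fnorm (lift_supp K S m M U T)"
    using nsp_rip_stability[OF nsp rip Sstar Sbar hstar g T_sum] eta_le
    unfolding U_def \<eta>_def by linarith
  also have "\<dots> \<le> \<gamma> * (\<delta> + \<eta>)"
    using \<open>fnorm (lift_supp K S m M U T) \<le> \<eta> + \<delta>\<close> nsp
    by (intro mult_left_mono) (auto simp: deep_nsp_def)
  finally show ?thesis
    using rip unfolding T_def \<eta>_def by (simp add: deep_lower_rip_def field_simps)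
qed

section \<open>From close Segre tensors to close balanced parameters\<close>

lemma abs_le_tnorm: "i \<in> idx K S \<Longrightarrow> \<bar>T i\<bar> \<le> tnorm K S T"
  using member_le_L2_set[OF finite_idx, of i K S "\<lambda>i. \<bar>T i\<bar>"]
  by (simp add: tnorm_def L2_set_def)

lemma layer_inf_ge: "j \<in> {1..S} \<Longrightarrow> \<bar>h k j\<bar> \<le> layer_inf S h k"
  unfolding layer_inf_def by simp

lemma layer_inf_attained: "S \<ge> 1 \<Longrightarrow> \<exists>j\<in>{1..S}. \<bar>h k j\<bar> = layer_inf S h k"
proof -
  assume "S \<ge> 1"
  then have "layer_inf S h k \<in> (\<lambda>i. \<bar>h k i\<bar>) ` {1..S}"
    unfolding layer_inf_def by (intro Max_in) auto
  then show ?thesis by auto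
qed

lemma layer_inf_eqI:
  "j \<in> {1..S} \<Longrightarrow> \<bar>h k j\<bar> = x \<Longrightarrow> (\<forall>j\<in>{1..S}. \<bar>h k j\<bar> \<le> x) \<Longrightarrow> layer_inf S h k = x"
  unfolding layer_inf_def by (intro Max_eqI) auto

lemma tinfnorm_eqI:
  "i \<in> idx K S \<Longrightarrow> \<bar>T i\<bar> = x \<Longrightarrow> (\<forall>i\<in>idx K S. \<bar>T i\<bar> \<le> x) \<Longrightarrow> tinfnorm K S T = x"
  unfolding tinfnorm_def using finite_idx by (intro Max_eqI) auto

lemma layer_inf_pos: "h \<in> params_nz K S \<Longrightarrow> k \<in> {1..K} \<Longrightarrow> layer_inf S h k > 0"
  unfolding params_nz_def by (fastforce intro: less_le_trans[OF _ layer_inf_ge])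

lemma layer_inf_scale:
  assumes "S \<ge> 1"
  shows "layer_inf S (\<lambda>k i. lam k * h k i) k = \<bar>lam k\<bar> * layer_inf S h k"
proof -
  obtain j where j: "j \<in> {1..S}" "\<bar>h k j\<bar> = layer_inf S h k"
    using layer_inf_attained[OF assms] by blast
  show ?thesis
    using j layer_inf_ge[of _ S h k]
    by (intro layer_inf_eqI[OF j(1)]) (auto simp: abs_mult intro: mult_left_mono)
qed

lemma argmax_idx:
  assumes "S \<ge> 1"
  obtains js where "js \<in> idx K S" "\<forall>k\<in>{1..K}. \<bar>h k (js k)\<bar> = layer_inf S h k"
proof -
  obtain f where f: "\<forall>k. f k \<in> {1..S} \<and> \<bar>h k (f k)\<bar> = layer_inf S h k"
    using layer_inf_attained[OF assms] by metis
  have "restrict f {1..K} \<in> idx K S"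
    using f unfolding idx_def by auto
  then show thesis
    using f that by auto
qed

lemma tinfnorm_segre:
  assumes "S \<ge> 1"
  shows "tinfnorm K S (segre K S h) = (\<Prod>k=1..K. layer_inf S h k)"
proof -
  obtain js where js: "js \<in> idx K S" "\<forall>k\<in>{1..K}. \<bar>h k (js k)\<bar> = layer_inf S h k"
    using argmax_idx[OF assms] by blast
  show ?thesis
    using js idx_mem layer_inf_ge
    by (intro tinfnorm_eqI[OF js(1)]) (auto simp: segre_def abs_prod intro!: prod_mono)
qed

lemma tinfnorm_segre_pos:
  "S \<ge> 1 \<Longrightarrow> h \<in> params_nz K S \<Longrightarrow> tinfnorm K S (segre K S h) > 0"
  using layer_inf_pos by (auto simp: tinfnorm_segre intro!: prod_pos)

lemma segre_pclass:
  assumes "g \<in> pclass K S h"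
  shows "segre K S g = segre K S h"
proof
  fix i
  obtain lam where lam: "(\<Prod>k=1..K. lam k) = 1" "\<forall>k\<in>{1..K}. \<forall>i\<in>{1..S}. g k i = lam k * h k i"
    using assms by (auto simp: pclass_def)
  show "segre K S g i = segre K S h i"
  proof (cases "i \<in> idx K S")
    case True
    then have "(\<Prod>k=1..K. g k (i k)) = (\<Prod>k=1..K. lam k * h k (i k))"
      using lam(2) idx_mem by (intro prod.cong) auto
    then show ?thesis
      using True lam(1) by (simp add: segre_def prod.distrib)
  qed (simp add: segre_def)
qed

lemma segre_split:
  assumes "i \<in> idx K S" "k \<in> {1..K}"
  shows "segre K S h i = h k (i k) * (\<Prod>l\<in>{1..K} - {k}. h l (i l))"
  using assms by (simp add: segre_def prod.remove)

lemma root_power: "0 < N \<Longrightarrow> K \<ge> 1 \<Longrightarrow> (N powr (1 / real K)) ^ K = N"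
  by (simp add: powr_realpow[symmetric] powr_powr)

lemma balanced_representative:
  assumes S: "S \<ge> 1" and K: "K \<ge> 1" and h: "h \<in> params_nz K S"
    and s_abs: "\<forall>k\<in>{1..K}. \<bar>s k\<bar> = 1" and s_prod: "(\<Prod>k=1..K. s k) = 1"
    and n: "n = tinfnorm K S (segre K S h) powr (1 / real K)"
  defines "h' \<equiv> \<lambda>k i. s k * (n / layer_inf S h k) * h k i"
  shows "h' \<in> pclass K S h \<inter> params_diag K S" and "\<forall>k\<in>{1..K}. layer_inf S h' k = n"
proof -
  let ?N = "tinfnorm K S (segre K S h)"
  have pos: "layer_inf S h k > 0" if "k \<in> {1..K}" for k
    using layer_inf_pos[OF h that] .
  have N: "?N > 0" "?N = (\<Prod>k=1..K. layer_inf S h k)"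
    using tinfnorm_segre_pos[OF S h] tinfnorm_segre[OF S] by auto
  have n_pos: "n > 0"
    unfolding n using N(1) by simp
  have "(\<Prod>k=1..K. s k * (n / layer_inf S h k)) = n ^ K / ?N"
    using s_prod N(2) pos by (simp add: prod.distrib prod_dividef less_imp_neq[symmetric])
  then have lam_prod: "(\<Prod>k=1..K. s k * (n / layer_inf S h k)) = 1"
    using root_power[OF N(1) K] N(1) n by simp
  have layer: "layer_inf S h' k = n" if k: "k \<in> {1..K}" for k
  proof -
    have "layer_inf S h' k = \<bar>s k * (n / layer_inf S h k)\<bar> * layer_inf S h k"
      unfolding h'_def by (rule layer_inf_scale[OF S])
    also have "\<dots> = n"
      using s_abs k pos[OF k] n_pos by (simp add: abs_mult)
    finally show ?thesis .
  qed
  then show layers: "\<forall>k\<in>{1..K}. layer_inf S h' k = n" by blast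
  have "h' \<in> pclass K S h"
    using h s_abs pos[THEN less_imp_neq] n_pos lam_prod
    unfolding h'_def pclass_def params_nz_def params_def
    by (auto intro!: exI[of _ "\<lambda>k. s k * (n / layer_inf S h k)"])
  then show "h' \<in> pclass K S h \<inter> params_diag K S"
    using layers K by (auto simp: params_diag_def pclass_def)
qed

text \<open>The ratios of g to h along js lie in (0, 1], and their product is close to 1 because the
  Segre tensors are close at js; comparing them at js with the k-th coordinate changed to j then
  isolates the difference of h and g at (k, j).\<close>

lemma layers_close_if_segre_close:
  fixes h g :: "nat \<Rightarrow> nat \<Rightarrow> real"
  assumes K: "K \<ge> 1" and n: "n > 0" and js: "js \<in> idx K S"
    and h_js: "\<forall>l\<in>{1..K}. \<bar>h l (js l)\<bar> = n"
    and g_le: "\<forall>l\<in>{1..K}. \<forall>j\<in>{1..S}. \<bar>g l j\<bar> \<le> n"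
    and same_sign: "\<forall>l\<in>{1..K}. h l (js l) * g l (js l) > 0"
    and close: "\<forall>i\<in>idx K S. \<bar>segre K S h i - segre K S g i\<bar> \<le> \<epsilon>"
    and k: "k \<in> {1..K}" and j: "j \<in> {1..S}"
  shows "\<bar>h k j - g k j\<bar> \<le> 2 * \<epsilon> * n / n ^ K"
proof -
  define ratio where "ratio l = g l (js l) / h l (js l)" for l
  define A where "A = {1..K} - {k}"
  define R where "R = (\<Prod>l\<in>A. ratio l)"
  define H where "H = (\<Prod>l\<in>A. h l (js l))"
  define P where "P = n ^ (K - 1)"
  have P: "P > 0" "n ^ K = n * P"
    using K n unfolding P_def by (cases K, simp_all)+
  have ratio_pos: "ratio l > 0" and ratio_le: "ratio l \<le> 1"
    and g_js: "g l (js l) = ratio l * h l (js l)" if l: "l \<in> {1..K}" for l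
  proof -
    have h_nz: "h l (js l) \<noteq> 0"
      using h_js l n by auto
    show pos: "ratio l > 0"
      using same_sign l unfolding ratio_def zero_less_divide_iff zero_less_mult_iff by auto
    have "ratio l = \<bar>g l (js l)\<bar> / n"
      using pos h_js l unfolding ratio_def by (metis abs_divide abs_of_pos)
    moreover have "\<bar>g l (js l)\<bar> \<le> n"
      using g_le l idx_mem[OF js l] by blast
    ultimately show "ratio l \<le> 1"
      using n by simp
    show "g l (js l) = ratio l * h l (js l)"
      using h_nz unfolding ratio_def by simp
  qed
  have R_nonneg: "0 \<le> R"
    unfolding R_def A_def using ratio_pos by (intro prod_nonneg) (simp add: less_imp_le)
  have R_le: "R \<le> 1"
    unfolding R_def A_def using ratio_pos ratio_le by (intro prod_le_1) (simp add: less_imp_le)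
  have R_ge: "ratio k * R \<le> R"
    using R_nonneg ratio_pos[OF k] ratio_le[OF k] by (simp add: mult_left_le_one_le)
  have abs_H: "\<bar>H\<bar> = P"
    using h_js k unfolding H_def A_def P_def by (simp add: abs_prod)
  have g_A: "(\<Prod>l\<in>A. g l (js l)) = R * H"
    using g_js unfolding R_def H_def A_def by (simp add: prod.distrib)
  have "segre K S h js - segre K S g js = h k (js k) * H * (1 - ratio k * R)"
    using segre_split[OF js k, of h] segre_split[OF js k, of g] g_js[OF k] g_A
    by (simp add: H_def A_def algebra_simps)
  moreover have "\<bar>1 - ratio k * R\<bar> = 1 - ratio k * R"
    using R_ge R_le by simp
  ultimately have "\<bar>segre K S h js - segre K S g js\<bar> = n * P * (1 - ratio k * R)"
    using h_js k abs_H by (simp add: abs_mult)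
  then have "n * P * (1 - ratio k * R) \<le> \<epsilon>"
    using close js by fastforce
  moreover have "n * P * (1 - R) \<le> n * P * (1 - ratio k * R)"
    using R_ge n P by (intro mult_left_mono) auto
  ultimately have "n * P * (1 - R) \<le> \<epsilon>"
    by linarith
  then have "n * (1 - R) \<le> \<epsilon> / P"
    using P by (simp add: pos_le_divide_eq mult_ac)
  moreover have "\<bar>g k j\<bar> * (1 - R) \<le> n * (1 - R)"
    using g_le k j R_le by (intro mult_right_mono) auto
  moreover have "\<bar>h k j - g k j * R\<bar> \<le> \<epsilon> / P"
  proof -
    have jk: "js(k := j) \<in> idx K S"
      using js k j unfolding idx_def by (auto simp: PiE_def Pi_def extensional_def)
    have "segre K S h (js(k := j)) - segre K S g (js(k := j)) = (h k j - g k j * R) * H"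
      using segre_split[OF jk k, of h] segre_split[OF jk k, of g] g_A
      by (simp add: H_def A_def algebra_simps)
    then have "\<bar>h k j - g k j * R\<bar> * P = \<bar>segre K S h (js(k := j)) - segre K S g (js(k := j))\<bar>"
      using abs_H by (simp add: abs_mult)
    then have "\<bar>h k j - g k j * R\<bar> * P \<le> \<epsilon>"
      using close jk by fastforce
    then show ?thesis
      using P by (simp add: pos_le_divide_eq)
  qed
  moreover have "\<bar>h k j - g k j\<bar> \<le> \<bar>h k j - g k j * R\<bar> + \<bar>g k j\<bar> * (1 - R)"
  proof -
    have "\<bar>h k j - g k j\<bar> = \<bar>(h k j - g k j * R) - g k j * (1 - R)\<bar>"
      by (simp add: algebra_simps)
    also have "\<dots> \<le> \<bar>h k j - g k j * R\<bar> + \<bar>g k j * (1 - R)\<bar>"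
      by (rule abs_triangle_ineq4)
    also have "\<bar>g k j * (1 - R)\<bar> = \<bar>g k j\<bar> * (1 - R)"
      using R_le by (simp add: abs_mult)
    finally show ?thesis .
  qed
  ultimately have "\<bar>h k j - g k j\<bar> \<le> 2 * \<epsilon> / P"
    by linarith
  then show ?thesis
    using P n by simp
qed

text \<open>Since the two Segre tensors are within half the larger sup-norm of each other, their
  entries at a maximising index of the larger one have the same sign, so the signs of the layers of
  the smaller one can be chosen to agree with those of the larger one along that index.\<close>

lemma close_segre_balanced_representatives:
  assumes S: "S \<ge> 1" and K: "K \<ge> 1" and h: "h \<in> params_nz K S" and g: "g \<in> params_nz K S"
    and le: "tinfnorm K S (segre K S g) \<le> tinfnorm K S (segre K S h)"
    and close: "\<forall>i\<in>idx K S. \<bar>segre K S h i - segre K S g i\<bar> \<le> \<epsilon>"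
    and half: "\<epsilon> \<le> tinfnorm K S (segre K S h) / 2"
  defines "N \<equiv> tinfnorm K S (segre K S h)"
  obtains h' g' where "h' \<in> pclass K S h \<inter> params_diag K S" "g' \<in> pclass K S g \<inter> params_diag K S"
    and "\<forall>k\<in>{1..K}. \<forall>j\<in>{1..S}. \<bar>h' k j - g' k j\<bar> \<le> 2 * \<epsilon> * N powr (1 / real K) / N"
proof -
  define n where "n = N powr (1 / real K)"
  define q where "q = tinfnorm K S (segre K S g) powr (1 / real K)"
  have N_pos: "N > 0"
    unfolding N_def by (rule tinfnorm_segre_pos[OF S h])
  have n_pos: "n > 0" and nK: "n ^ K = N"
    using N_pos root_power[OF N_pos K] by (simp_all add: n_def)
  have q_le: "q \<le> n"
    unfolding q_def n_def N_def using le tinfnorm_segre_pos[OF S g] by (intro powr_mono2) auto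
  obtain js where js: "js \<in> idx K S" "\<forall>k\<in>{1..K}. \<bar>h k (js k)\<bar> = layer_inf S h k"
    using argmax_idx[OF S] by blast
  have abs_Ph: "\<bar>segre K S h js\<bar> = N"
    using js unfolding N_def tinfnorm_segre[OF S] by (simp add: segre_def abs_prod)
  define Ph where "Ph = segre K S h js"
  define Pg where "Pg = segre K S g js"
  have "Ph * (Ph - Pg) \<le> \<bar>Ph * (Ph - Pg)\<bar>"
    by (rule abs_ge_self)
  also have "\<dots> = N * \<bar>Ph - Pg\<bar>"
    by (simp add: abs_mult abs_Ph Ph_def)
  also have "\<dots> \<le> N * \<epsilon>"
    using close js N_pos by (simp add: mult_left_mono Ph_def Pg_def)
  also have "\<dots> \<le> N * (N / 2)"
    using half N_pos unfolding N_def by (simp add: mult_left_mono)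
  finally have "Ph * (Ph - Pg) \<le> N * N / 2"
    by simp
  moreover have "Ph * Ph = N * N"
    using abs_Ph unfolding Ph_def by (metis abs_mult_self_eq)
  moreover have "Ph * Pg = Ph * Ph - Ph * (Ph - Pg)"
    by (simp add: algebra_simps)
  moreover have "N * N > 0"
    using N_pos by simp
  ultimately have "segre K S h js * segre K S g js > 0"
    unfolding Ph_def Pg_def by linarith
  then have prod_pos: "(\<Prod>l=1..K. h l (js l) * g l (js l)) > 0"
    using js(1) by (simp add: segre_def prod.distrib)
  have hg_nz: "h l (js l) * g l (js l) \<noteq> 0" if "l \<in> {1..K}" for l
  proof -
    have "(\<Prod>l=1..K. h l (js l) * g l (js l)) \<noteq> 0"
      using prod_pos by linarith
    then show ?thesis
      using that by (simp add: prod_zero_iff)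
  qed
  define s where "s l = h l (js l) * g l (js l) / \<bar>h l (js l) * g l (js l)\<bar>" for l
  have s_abs: "\<forall>l\<in>{1..K}. \<bar>s l\<bar> = 1"
    using hg_nz by (simp add: s_def)
  have "(\<Prod>l=1..K. s l)
      = (\<Prod>l=1..K. h l (js l) * g l (js l)) / \<bar>\<Prod>l=1..K. h l (js l) * g l (js l)\<bar>"
    unfolding s_def prod_dividef abs_prod ..
  also have "\<dots> = 1"
    using prod_pos by (metis abs_of_pos divide_self less_irrefl)
  finally have s_prod: "(\<Prod>l=1..K. s l) = 1" .
  define h' where "h' = (\<lambda>k i. 1 * (n / layer_inf S h k) * h k i)"
  define g' where "g' = (\<lambda>k i. s k * (q / layer_inf S g k) * g k i)"
  have n_eq: "n = tinfnorm K S (segre K S h) powr (1 / real K)"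
    by (simp add: n_def N_def)
  have h': "h' \<in> pclass K S h \<inter> params_diag K S" "\<forall>k\<in>{1..K}. layer_inf S h' k = n"
    using balanced_representative[OF S K h _ _ n_eq, of "\<lambda>_. 1"] unfolding h'_def by simp_all
  have g': "g' \<in> pclass K S g \<inter> params_diag K S" "\<forall>k\<in>{1..K}. layer_inf S g' k = q"
    using balanced_representative[OF S K g s_abs s_prod q_def] by (simp_all add: g'_def)
  have "\<bar>h' k j - g' k j\<bar> \<le> 2 * \<epsilon> * n / n ^ K" if "k \<in> {1..K}" "j \<in> {1..S}" for k j
  proof (rule layers_close_if_segre_close[OF K n_pos js(1) _ _ _ _ that])
    show "\<forall>l\<in>{1..K}. \<bar>h' l (js l)\<bar> = n"
    proof
      fix l assume l: "l \<in> {1..K}"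
      have "\<bar>h' l (js l)\<bar> = n / layer_inf S h l * \<bar>h l (js l)\<bar>"
        using layer_inf_pos[OF h l] n_pos by (simp add: h'_def abs_mult)
      then show "\<bar>h' l (js l)\<bar> = n"
        using js(2) l layer_inf_pos[OF h l] by simp
    qed
    show "\<forall>l\<in>{1..K}. \<forall>j\<in>{1..S}. \<bar>g' l j\<bar> \<le> n"
      using g'(2) layer_inf_ge[of _ S g'] q_le by (metis order_trans)
    show "\<forall>l\<in>{1..K}. h' l (js l) * g' l (js l) > 0"
    proof
      fix l assume l: "l \<in> {1..K}"
      have "h' l (js l) * g' l (js l)
          = (n / layer_inf S h l * (q / layer_inf S g l)) * (h l (js l) * g l (js l) * s l)"
        by (simp add: h'_def g'_def mult_ac)
      moreover have "h l (js l) * g l (js l) * s l > 0"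
      proof -
        have "h l (js l) * g l (js l) * s l
            = \<bar>h l (js l) * g l (js l)\<bar> * \<bar>h l (js l) * g l (js l)\<bar> / \<bar>h l (js l) * g l (js l)\<bar>"
          unfolding s_def abs_mult_self_eq by simp
        also have "\<dots> = \<bar>h l (js l) * g l (js l)\<bar>"
          by (rule nonzero_mult_div_cancel_right) (use hg_nz[OF l] in simp)
        finally show ?thesis
          using hg_nz[OF l] by simp
      qed
      moreover have "q > 0"
        using tinfnorm_segre_pos[OF S g] by (simp add: q_def)
      ultimately show "h' l (js l) * g' l (js l) > 0"
        using layer_inf_pos[OF h l] layer_inf_pos[OF g l] n_pos by simp
    qed
    show "\<forall>i\<in>idx K S. \<bar>segre K S h' i - segre K S g' i\<bar> \<le> \<epsilon>"
      using close segre_pclass[of h' K S h] segre_pclass[of g' K S g] h'(1) g'(1) by simp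
  qed
  then show thesis
    using that h'(1) g'(1) nK by (simp add: n_def)
qed

lemma pnorm_nonneg:
  assumes "K \<ge> 1" "S \<ge> 1"
  shows "pnorm K S p D \<ge> 0"
proof (cases "p = \<infinity>")
  case True
  have "\<bar>D 1 1\<bar> \<le> Max ((\<lambda>(k, i). \<bar>D k i\<bar>) ` ({1..K} \<times> {1..S}))"
    using assms by (intro Max_ge) force+
  then show ?thesis
    using True unfolding pnorm_def by simp
qed (simp add: pnorm_def)

lemma pnorm_le_uniform:
  assumes K: "K \<ge> 1" and S: "S \<ge> 1" and p: "p \<ge> 1" and B: "B \<ge> 0"
    and D: "\<forall>k\<in>{1..K}. \<forall>i\<in>{1..S}. \<bar>D k i\<bar> \<le> B"
  shows "pnorm K S p D \<le> (real K * real S) powr inv_p p * B"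
proof (cases "p = \<infinity>")
  case True
  have "Max ((\<lambda>(k, i). \<bar>D k i\<bar>) ` ({1..K} \<times> {1..S})) \<le> B"
    using D K S by (subst Max_le_iff) auto
  then show ?thesis
    using True K S unfolding pnorm_def inv_p_def by simp
next
  case False
  obtain r where r: "p = ereal r"
    using p False by (cases p) auto
  have r1: "r \<ge> 1"
    using p r by simp
  have "(\<Sum>k=1..K. \<Sum>i=1..S. \<bar>D k i\<bar> powr r) \<le> (\<Sum>k=1..K. \<Sum>i=1..S. B powr r)"
    using D r1 by (intro sum_mono powr_mono2) auto
  then have "(\<Sum>k=1..K. \<Sum>i=1..S. \<bar>D k i\<bar> powr r) powr (1 / r)
      \<le> (real K * real S * B powr r) powr (1 / r)"
    using r1 by (intro powr_mono2) (auto intro!: sum_nonneg)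
  also have "\<dots> = (real K * real S) powr (1 / r) * B"
    using B r1 by (simp add: powr_mult powr_powr)
  finally show ?thesis
    using False r by (simp add: pnorm_def inv_p_def)
qed

lemma dist_p_le:
  assumes "K \<ge> 1" "S \<ge> 1"
    and "h' \<in> pclass K S h \<inter> params_diag K S" "g' \<in> pclass K S g \<inter> params_diag K S"
  shows "dist_p K S p h g \<le> pnorm K S p (\<lambda>k i. h' k i - g' k i)"
  unfolding dist_p_def
proof (rule cInf_lower)
  show "pnorm K S p (\<lambda>k i. h' k i - g' k i) \<in> {pnorm K S p (\<lambda>k i. h' k i - g' k i) |h' g'.
       h' \<in> pclass K S h \<inter> params_diag K S \<and> g' \<in> pclass K S g \<inter> params_diag K S}"
    using assms by blast
  show "bdd_below {pnorm K S p (\<lambda>k i. h' k i - g' k i) |h' g'.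
       h' \<in> pclass K S h \<inter> params_diag K S \<and> g' \<in> pclass K S g \<inter> params_diag K S}"
    using pnorm_nonneg[OF assms(1,2)] by (intro bdd_belowI[of _ 0]) auto
qed

lemma dist_p_sym: "dist_p K S p h g = dist_p K S p g h"
proof -
  have "pnorm K S p (\<lambda>k i. a k i - b k i) = pnorm K S p (\<lambda>k i. b k i - a k i)" for a b
    unfolding pnorm_def by (simp add: abs_minus_commute)
  then have "{pnorm K S p (\<lambda>k i. h' k i - g' k i) |h' g'.
       h' \<in> pclass K S h \<inter> params_diag K S \<and> g' \<in> pclass K S g \<inter> params_diag K S}
      = {pnorm K S p (\<lambda>k i. h' k i - g' k i) |h' g'.
       h' \<in> pclass K S g \<inter> params_diag K S \<and> g' \<in> pclass K S h \<inter> params_diag K S}"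
    by blast
  then show ?thesis
    unfolding dist_p_def by simp
qed

lemma min_powr_exponent_nonpos:
  fixes a b :: real
  assumes "0 < a" "a \<le> b" "K \<ge> 1"
  shows "min (a powr (1 / real K - 1)) (b powr (1 / real K - 1)) = b powr (1 / real K) / b"
proof -
  have "b powr (1 / real K - 1) \<le> a powr (1 / real K - 1)"
    using assms by (intro powr_mono2') auto
  then show ?thesis
    using assms by (simp add: powr_diff)
qed

lemma dist_p_le_of_close_segre:
  assumes S: "S \<ge> 1" and K: "K \<ge> 1" and h: "h \<in> params_nz K S" and g: "g \<in> params_nz K S"
    and le: "tinfnorm K S (segre K S g) \<le> tinfnorm K S (segre K S h)"
    and close: "\<forall>i\<in>idx K S. \<bar>segre K S h i - segre K S g i\<bar> \<le> \<epsilon>"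
    and half: "\<epsilon> \<le> tinfnorm K S (segre K S h) / 2" and \<epsilon>: "\<epsilon> \<ge> 0"
    and p: "p \<ge> 1"
  shows "dist_p K S p h g \<le> 7 * (real K * real S) powr (inv_p p)
           * min (tinfnorm K S (segre K S g) powr (1 / real K - 1))
                 (tinfnorm K S (segre K S h) powr (1 / real K - 1)) * \<epsilon>"
proof -
  define N where "N = tinfnorm K S (segre K S h)"
  define C where "C = (real K * real S) powr inv_p p * (N powr (1 / real K) / N)"
  have N_pos: "N > 0"
    unfolding N_def by (rule tinfnorm_segre_pos[OF S h])
  obtain h' g' where h': "h' \<in> pclass K S h \<inter> params_diag K S"
    and g': "g' \<in> pclass K S g \<inter> params_diag K S"
    and layers: "\<forall>k\<in>{1..K}. \<forall>j\<in>{1..S}. \<bar>h' k j - g' k j\<bar> \<le> 2 * \<epsilon> * N powr (1 / real K) / N"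
    using close_segre_balanced_representatives[OF S K h g le close half] unfolding N_def by blast
  have "dist_p K S p h g \<le> pnorm K S p (\<lambda>k i. h' k i - g' k i)"
    by (rule dist_p_le[OF K S h' g'])
  also have "\<dots> \<le> (real K * real S) powr inv_p p * (2 * \<epsilon> * N powr (1 / real K) / N)"
    using \<epsilon> N_pos by (intro pnorm_le_uniform[OF K S p _ layers]) simp
  also have "\<dots> = 2 * (C * \<epsilon>)"
    by (simp add: C_def)
  also have "\<dots> \<le> 7 * (C * \<epsilon>)"
    using \<epsilon> N_pos by (intro mult_right_mono) (auto simp: C_def)
  finally show ?thesis
    using min_powr_exponent_nonpos[OF tinfnorm_segre_pos[OF S g] le K]
    by (simp add: C_def N_def mult.assoc)
qed

theorem theorem3:
  fixes K S :: nat and m :: "nat \<Rightarrow> nat"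
    and M :: "nat \<Rightarrow> (nat \<Rightarrow> real) \<Rightarrow> real mat"
    and Ms :: "(nat \<Rightarrow> nat set) set"
    and \<gamma> \<rho> \<sigma> \<delta> :: real
    and Sbar Sstar :: "nat \<Rightarrow> nat set"
    and hbar hstar :: "nat \<Rightarrow> nat \<Rightarrow> real"
    and e X :: "real mat"
  assumes K: "K \<ge> 1" and S: "S \<ge> 1"
    and m_pos: "\<forall>k\<in>{1..K+1}. m k > 0"
    and M_dim: "\<forall>k\<in>{1..K}. \<forall>v. M k v \<in> carrier_mat (m k) (m (Suc k))"
    and M_fun: "\<forall>k\<in>{1..K}. \<forall>v w. (\<forall>i\<in>{1..S}. v i = w i) \<longrightarrow> M k v = M k w"
    and M_add: "\<forall>k\<in>{1..K}. \<forall>v w. M k (\<lambda>i. v i + w i) = M k v + M k w"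
    and M_smult: "\<forall>k\<in>{1..K}. \<forall>a v. M k (\<lambda>i. a * v i) = a \<cdot>\<^sub>m M k v"
    and Ms_fin: "finite Ms"
    and Ms_supp: "\<forall>Sp\<in>Ms. \<forall>k\<in>{1..K}. Sp k \<subseteq> {1..S}"
    and nsp: "deep_nsp K S m M Ms \<gamma> \<rho>"
    and rip: "deep_lower_rip K S m M Ms \<sigma>"
    and Sbar: "Sbar \<in> Ms" and hbar: "hbar \<in> params_supp K S Sbar"
    and \<delta>: "\<delta> \<ge> 0"
    and e: "e \<in> carrier_mat (m 1) (m (K+1))" and e_le: "fnorm e \<le> \<delta>"
    and X: "X = layer_prod K M hbar + e"
    and Sstar: "Sstar \<in> Ms" and hstar: "hstar \<in> params_supp K S Sstar"
    and eta_le: "fnorm (layer_prod K M hstar - X) + \<delta> \<le> \<rho>"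
  shows "tnorm K S (\<lambda>i. segre K S hstar i - segre K S hbar i)
           \<le> \<gamma> / \<sigma> * (\<delta> + fnorm (layer_prod K M hstar - X))
         \<and> ((\<gamma> / \<sigma> * (\<delta> + fnorm (layer_prod K M hstar - X))
               \<le> 1/2 * max (tinfnorm K S (segre K S hstar)) (tinfnorm K S (segre K S hbar))
             \<and> hstar \<in> params_nz K S \<and> hbar \<in> params_nz K S)
            \<longrightarrow> (\<forall>p::ereal. p \<ge> 1 \<longrightarrow>
                  dist_p K S p hstar hbar
                  \<le> 7 * (real K * real S) powr (inv_p p)
                      * min (tinfnorm K S (segre K S hbar) powr (1 / real K - 1))
                            (tinfnorm K S (segre K S hstar) powr (1 / real K - 1))
                      * (\<gamma> / \<sigma> * (\<delta> + fnorm (layer_prod K M hstar - X)))))"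
proof -
  interpret linear_layers K S m M
    using K M_dim M_fun M_add M_smult by unfold_locales
  define \<epsilon> where "\<epsilon> = \<gamma> / \<sigma> * (\<delta> + fnorm (layer_prod K M hstar - X))"
  have stable: "tnorm K S (\<lambda>i. segre K S hstar i - segre K S hbar i) \<le> \<epsilon>"
    unfolding \<epsilon>_def by (rule segre_stability[OF nsp rip Sstar hstar Sbar hbar e e_le X eta_le])
  have close: "\<forall>i\<in>idx K S. \<bar>segre K S hstar i - segre K S hbar i\<bar> \<le> \<epsilon>"
    using abs_le_tnorm[of _ K S "\<lambda>i. segre K S hstar i - segre K S hbar i"] stable by force
  have "tnorm K S (\<lambda>i. segre K S hstar i - segre K S hbar i) \<ge> 0"
    by (simp add: tnorm_def sum_nonneg)
  then have \<epsilon>_nonneg: "\<epsilon> \<ge> 0"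
    using stable by linarith
  show ?thesis
    unfolding \<epsilon>_def[symmetric]
  proof (intro conjI impI allI stable)
    fix p :: ereal
    assume H: "\<epsilon> \<le> 1/2 * max (tinfnorm K S (segre K S hstar)) (tinfnorm K S (segre K S hbar))
        \<and> hstar \<in> params_nz K S \<and> hbar \<in> params_nz K S"
      and p: "p \<ge> 1"
    show "dist_p K S p hstar hbar \<le> 7 * (real K * real S) powr (inv_p p)
        * min (tinfnorm K S (segre K S hbar) powr (1 / real K - 1))
              (tinfnorm K S (segre K S hstar) powr (1 / real K - 1)) * \<epsilon>"
    proof (cases "tinfnorm K S (segre K S hbar) \<le> tinfnorm K S (segre K S hstar)")
      case True
      then show ?thesis
        using dist_p_le_of_close_segre[OF S K _ _ True close _ \<epsilon>_nonneg p] H by simp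
    next
      case False
      then have le: "tinfnorm K S (segre K S hstar) \<le> tinfnorm K S (segre K S hbar)"
        by simp
      have close': "\<forall>i\<in>idx K S. \<bar>segre K S hbar i - segre K S hstar i\<bar> \<le> \<epsilon>"
        using close by (simp add: abs_minus_commute)
      show ?thesis
        using dist_p_le_of_close_segre[OF S K _ _ le close' _ \<epsilon>_nonneg p] H False
        by (simp add: dist_p_sym[of K S p hstar] min.commute)
    qed
  qed
qed

end
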